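(* Let $2^{t-1}<n\le 2^t-4$, $i=2^t-3-n$, $j=n-2^{t-1}+1$, $W_2=\mathbb{F}_2[w_2,w_3]$. Then for all $x,y,z\in W_2$, \[ q_{n-2}x+q_{n-1}y+q_nz=\det\begin{pmatrix} x& r_j& w_3q_{i-1}\\ y& w_3r_{j-2}& q_{i+1}\\ z& r_{j-1}& q_i\end{pmatrix} \] (over $\mathbb{F}_2$). Moreover, the kernel of the $W_2$-linear map $d_1\colon W_2^{\oplus 3}\to W_2$, $(x,y,z)\mapsto q_{n-2}x+q_{n-1}y+q_nz$, is a free graded $W_2$-module of rank $2$ with basis $u=(r_j,\,w_3r_{j-2},\,r_{j-1})^{\mathrm t}$ and $v=(w_3q_{i-1},\,q_{i+1},\,q_i)^{\mathrm t}$.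
   Context: $W_2$ is graded by $\deg w_2=2,\deg w_3=3$. $q_0=1$, $q_m=0$ for $m<0$, $q_m=w_2q_{m-2}+w_3q_{m-3}$ for $m\ge1$; $r_0=1$, $r_m=0$ for $m<0$, $r_{m+1}=w_2r_m+w_3^2r_{m-2}$ for $m\ge0$. *)

theory Defs
  imports "HOL-Analysis.Analysis" "HOL-Library.Z2" "HOL-Computational_Algebra.Polynomial"
begin

text \<open>W_2 = F_2[w_2, w_3], modelled as (F_2[w_3])[w_2], i.e. type bit poly poly.
  The outer variable is w_2, the inner (coefficient) variable is w_3.\<close>
type_synonym W2 = "bit poly poly"

definition w2 :: W2 where "w2 = [:0, 1:]"
definition w3 :: W2 where "w3 = [:[:0, 1:]:]"

definition whom :: "int \<Rightarrow> W2 \<Rightarrow> bool" where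
  "whom d p \<longleftrightarrow> (\<forall>a b. coeff (coeff p a) b \<noteq> 0 \<longrightarrow> int (2*a + 3*b) = d)"

function q :: "int \<Rightarrow> W2" where
  "q m = (if m < 0 then 0 else if m = 0 then 1 else w2 * q (m - 2) + w3 * q (m - 3))"
  by auto
termination by (relation "Wellfounded.measure (\<lambda>m. nat (m + 1))") auto

function r :: "int \<Rightarrow> W2" where
  "r m = (if m < 0 then 0 else if m = 0 then 1 else w2 * r (m - 1) + w3^2 * r (m - 3))"
  by auto
termination by (relation "Wellfounded.measure (\<lambda>m. nat (m + 1))") auto

declare q.simps [simp del] r.simps [simp del]

definition d1 :: "nat \<Rightarrow> W2 \<Rightarrow> W2 \<Rightarrow> W2 \<Rightarrow> W2" where
  "d1 n x y z = q (int n - 2) * x + q (int n - 1) * y + q (int n) * z"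

text \<open>Grading on the source W_2^3 making d_1 degree-preserving: an element (x,y,z)
  has degree e iff x, y, z are homogeneous of degrees e-(n-2), e-(n-1), e-n.\<close>
definition hom3 :: "nat \<Rightarrow> int \<Rightarrow> W2 \<times> W2 \<times> W2 \<Rightarrow> bool" where
  "hom3 n e t \<longleftrightarrow> (case t of (x, y, z) \<Rightarrow>
      whom (e - (int n - 2)) x \<and> whom (e - (int n - 1)) y \<and> whom (e - int n) z)"

end

(*
  The identity says that (q_{n-2}, q_{n-1}, q_n) is the cross product u \<times> v of the two
  columns u, v (signs do not matter in characteristic 2).  Its entries come from an
  expansion of q_{i+2j} through r_j whose error term w_3 q_{j-2} q_{i+j-1} vanishes, because
  i + j + 2 = 2^{t-1} and the doubling formula q_{2m+1} = w_3 q_{m-1}^2 gives q_{2^s-3} = 0.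
  Over a domain the kernel of x \<mapsto> x \<bullet> (u \<times> v) is spanned by u and v as soon as
  u \<times> v is primitive: x \<times> v and u \<times> x are then proportional, hence equal, to multiples
  a (u \<times> v) and b (u \<times> v), and x = a u + b v.  Primitivity of (q_{m-2}, q_{m-1}, q_m)
  holds because these generate an ideal containing w_3^{m-2}, while w_3 is prime and does
  not divide q_{2k} = w_2^k mod w_3.
*)
theory Submission
  imports Defs "HOL-Computational_Algebra.Polynomial_Factorial"
begin

section \<open>Primitive triples and cross products\<close>

text \<open>Over a UFD, \<open>(D1, D2, D3)\<close> is primitive iff its entries have no common prime factor.\<close>

definition primitive3 :: "'a::comm_ring_1 \<Rightarrow> 'a \<Rightarrow> 'a \<Rightarrow> bool" where
  "primitive3 D1 D2 D3 \<longleftrightarrow> (\<forall>c1 c2 c3. c1 * D2 = c2 * D1 \<and> c1 * D3 = c3 * D1 \<and> c2 * D3 = c3 * D2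
      \<longrightarrow> (\<exists>a. c1 = a * D1 \<and> c2 = a * D2 \<and> c3 = a * D3))"

lemma primitive3_swap:
  assumes "primitive3 D2 D1 D3"
  shows "primitive3 D1 D2 D3"
  unfolding primitive3_def
proof (intro allI impI)
  fix c1 c2 c3
  assume "c1 * D2 = c2 * D1 \<and> c1 * D3 = c3 * D1 \<and> c2 * D3 = c3 * D2"
  with assms[unfolded primitive3_def, rule_format, of c2 c1 c3]
  show "\<exists>a. c1 = a * D1 \<and> c2 = a * D2 \<and> c3 = a * D3"
    by auto
qed

lemma dvd_of_dvd_mult_prime_power:
  fixes p d c :: "'a::idom"
  assumes "prime_elem p" and "\<not> p dvd d" and "d dvd c * p^K"
  shows "d dvd c"
  using assms(3)
proof (induction K arbitrary: c)
  case (Suc K)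
  from Suc.prems obtain y where y: "c * p ^ Suc K = d * y" ..
  then have "p dvd d * y" by (metis dvd_mult dvd_triv_left power_Suc)
  with assms(1,2) have "p dvd y" by (simp add: prime_elem_dvd_mult_iff)
  then obtain y' where "y = p * y'" ..
  with y have "p * (c * p^K) = p * (d * y')"
    by (simp add: ac_simps)
  then have "c * p^K = d * y'"
    using prime_elem_not_zeroI[OF assms(1)] by simp
  then show ?case by (rule Suc.IH[OF dvdI])
qed simp

lemma primitive3_if_prime_power_combination:
  fixes D1 D2 D3 p :: "'a::idom"
  assumes "prime_elem p" and comb: "s1 * D1 + s2 * D2 + s3 * D3 = p^K" and "\<not> p dvd D1"
  shows "primitive3 D1 D2 D3"
  unfolding primitive3_def
proof (intro allI impI)
  fix c1 c2 c3
  assume "c1 * D2 = c2 * D1 \<and> c1 * D3 = c3 * D1 \<and> c2 * D3 = c3 * D2"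
  then have c2: "c1 * D2 = c2 * D1" and c3: "c1 * D3 = c3 * D1" by simp_all
  have "c1 * p^K = s1 * (c1 * D1) + s2 * (c1 * D2) + s3 * (c1 * D3)"
    unfolding comb[symmetric] by (simp add: algebra_simps)
  also have "\<dots> = D1 * (s1 * c1 + s2 * c2 + s3 * c3)"
    unfolding c2 c3 by (simp add: algebra_simps)
  finally have "D1 dvd c1"
    using dvd_of_dvd_mult_prime_power[OF assms(1,3)] by (metis dvdI)
  then obtain a where a: "c1 = D1 * a" ..
  have "D1 \<noteq> 0" using assms(3) by auto
  moreover have "D1 * c2 = D1 * (a * D2)" "D1 * c3 = D1 * (a * D3)"
    using c2 c3 unfolding a by (simp_all only: ac_simps)
  ultimately show "\<exists>a. c1 = a * D1 \<and> c2 = a * D2 \<and> c3 = a * D3"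
    using a by (auto simp: ac_simps)
qed

lemma det_3_eq_triple_product:
  fixes x y z u1 u2 u3 v1 v2 v3 :: "'a::comm_ring_1"
  shows "det (vector [vector [x, u1, v1], vector [y, u2, v2], vector [z, u3, v3]] :: 'a^3^3)
    = (u2 * v3 - u3 * v2) * x + (u3 * v1 - u1 * v3) * y + (u1 * v2 - u2 * v1) * z"
  unfolding det_3 by (simp add: algebra_simps)

lemma cross_product_kernel:
  fixes x y z u1 u2 u3 v1 v2 v3 D1 D2 D3 :: "'a::idom"
  assumes D1: "D1 = u2 * v3 - u3 * v2" and D2: "D2 = u3 * v1 - u1 * v3" and D3: "D3 = u1 * v2 - u2 * v1"
    and prim: "primitive3 D1 D2 D3" and nz: "D1 \<noteq> 0 \<or> D2 \<noteq> 0 \<or> D3 \<noteq> 0"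
  shows "D1 * x + D2 * y + D3 * z = 0 \<longleftrightarrow>
    (\<exists>a b. x = a * u1 + b * v1 \<and> y = a * u2 + b * v2 \<and> z = a * u3 + b * v3)"
proof
  assume s: "D1 * x + D2 * y + D3 * z = 0"
  \<comment> \<open>\<open>c = x \<times> v\<close> and \<open>e = u \<times> x\<close> are proportional to \<open>D = u \<times> v\<close> since \<open>x \<bullet> D = 0\<close>\<close>
  define c1 c2 c3 where "c1 = y * v3 - z * v2" and "c2 = z * v1 - x * v3" and "c3 = x * v2 - y * v1"
  define e1 e2 e3 where "e1 = u2 * z - u3 * y" and "e2 = u3 * x - u1 * z" and "e3 = u1 * y - u2 * x"
  have "c1 * D2 - c2 * D1 = (D1 * x + D2 * y + D3 * z) * v3"
    "c1 * D3 - c3 * D1 = - (D1 * x + D2 * y + D3 * z) * v2"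
    "c2 * D3 - c3 * D2 = (D1 * x + D2 * y + D3 * z) * v1"
    "e1 * D2 - e2 * D1 = - (D1 * x + D2 * y + D3 * z) * u3"
    "e1 * D3 - e3 * D1 = (D1 * x + D2 * y + D3 * z) * u2"
    "e2 * D3 - e3 * D2 = - (D1 * x + D2 * y + D3 * z) * u1"
    unfolding D1 D2 D3 c1_def c2_def c3_def e1_def e2_def e3_def by (simp_all add: algebra_simps)
  with s have "c1 * D2 = c2 * D1 \<and> c1 * D3 = c3 * D1 \<and> c2 * D3 = c3 * D2"
    and "e1 * D2 = e2 * D1 \<and> e1 * D3 = e3 * D1 \<and> e2 * D3 = e3 * D2"
    by simp_all
  with prim obtain a b where a: "c1 = a * D1" "c2 = a * D2" "c3 = a * D3"
    and b: "e1 = b * D1" "e2 = b * D2" "e3 = b * D3"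
    unfolding primitive3_def by meson
  have "D1 * x = c1 * u1 + e1 * v1 + (D1 * x + D2 * y + D3 * z)"
    "D2 * x = c2 * u1 + e2 * v1" "D3 * x = c3 * u1 + e3 * v1"
    "D1 * y = c1 * u2 + e1 * v2" "D2 * y = c2 * u2 + e2 * v2 + (D1 * x + D2 * y + D3 * z)"
    "D3 * y = c3 * u2 + e3 * v2" "D1 * z = c1 * u3 + e1 * v3" "D2 * z = c2 * u3 + e2 * v3"
    "D3 * z = c3 * u3 + e3 * v3 + (D1 * x + D2 * y + D3 * z)"
    unfolding D1 D2 D3 c1_def c2_def c3_def e1_def e2_def e3_def by (simp_all add: algebra_simps)
  then have "D * x = D * (a * u1 + b * v1)" "D * y = D * (a * u2 + b * v2)" "D * z = D * (a * u3 + b * v3)"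
    if "D \<in> {D1, D2, D3}" for D
    using that unfolding s a b by (auto simp: algebra_simps)
  with nz show "\<exists>a b. x = a * u1 + b * v1 \<and> y = a * u2 + b * v2 \<and> z = a * u3 + b * v3"
    by (metis insertCI mult_left_cancel)
next
  assume "\<exists>a b. x = a * u1 + b * v1 \<and> y = a * u2 + b * v2 \<and> z = a * u3 + b * v3"
  then show "D1 * x + D2 * y + D3 * z = 0"
    unfolding D1 D2 D3 by (auto simp: algebra_simps)
qed

lemma cross_product_independent:
  fixes a b u1 u2 u3 v1 v2 v3 D1 D2 D3 :: "'a::idom"
  assumes D1: "D1 = u2 * v3 - u3 * v2" and D2: "D2 = u3 * v1 - u1 * v3" and D3: "D3 = u1 * v2 - u2 * v1"
    and nz: "D1 \<noteq> 0 \<or> D2 \<noteq> 0 \<or> D3 \<noteq> 0"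
    and w: "a * u1 + b * v1 = 0" "a * u2 + b * v2 = 0" "a * u3 + b * v3 = 0"
  shows "a = 0 \<and> b = 0"
proof -
  have "a * D1 = (a * u2 + b * v2) * v3 - (a * u3 + b * v3) * v2"
    "a * D2 = (a * u3 + b * v3) * v1 - (a * u1 + b * v1) * v3"
    "a * D3 = (a * u1 + b * v1) * v2 - (a * u2 + b * v2) * v1"
    "b * D1 = u2 * (a * u3 + b * v3) - u3 * (a * u2 + b * v2)"
    "b * D2 = u3 * (a * u1 + b * v1) - u1 * (a * u3 + b * v3)"
    "b * D3 = u1 * (a * u2 + b * v2) - u2 * (a * u1 + b * v1)"
    unfolding D1 D2 D3 by (simp_all add: algebra_simps)
  then show ?thesis
    using nz unfolding w by auto
qed

lemma bit_add_self: "(x::bit) + x = 0"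
  by (cases x) auto

lemma W2_add_self: "(x::W2) + x = 0"
  by (rule poly_eqI, rule poly_eqI) (simp only: coeff_add bit_add_self coeff_0)

lemma W2_two: "(2::W2) = 0"
  by (metis W2_add_self one_add_one)

lemma W2_diff_eq_add: "(a::W2) - b = a + b"
  by (metis W2_add_self add_eq_0_iff diff_conv_add_uminus)

section \<open>The sequences q and r\<close>

lemma q_neg: "m < 0 \<Longrightarrow> q m = 0"
  by (subst q.simps) simp

lemma q_0: "q 0 = 1"
  by (subst q.simps) simp

lemma q_rec: "m \<ge> 1 \<Longrightarrow> q m = w2 * q (m - 2) + w3 * q (m - 3)"
  by (subst q.simps) simp

lemma r_neg: "m < 0 \<Longrightarrow> r m = 0"
  by (subst r.simps) simp

lemma r_0: "r 0 = 1"
  by (subst r.simps) simp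

lemma r_rec: "m \<ge> 1 \<Longrightarrow> r m = w2 * r (m - 1) + w3^2 * r (m - 3)"
  by (subst r.simps) simp

lemma q_add:
  assumes "a \<ge> -1" and "b \<ge> 0"
  shows "q (a + b) = q a * q b + q (a + 1) * q (b - 1) + w3 * q (a - 1) * q (b - 2)"
  using assms
proof (induction a arbitrary: b rule: int_ge_induct)
  case base
  then show ?case by (simp add: q_neg q_0)
next
  case (step a)
  have IH: "q (a + (b + 1)) = q a * q (b + 1) + q (a + 1) * q b + w3 * q (a - 1) * q (b - 1)"
    using step.IH[of "b + 1"] step.prems by simp
  have "q (a + 1 + b) = q (a + (b + 1))" by (simp add: ac_simps)
  also have "\<dots> = q (a + 1) * q b + q (a + 2) * q (b - 1) + w3 * q a * q (b - 2)"
    using q_rec[of "b + 1"] q_rec[of "a + 2"] step.hyps step.prems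
    unfolding IH by (simp add: algebra_simps)
  finally show ?case by (simp add: ac_simps)
qed

lemma q_r_expansion:
  assumes "j \<ge> 0" and "i \<ge> -1"
  shows "q (i + 2*j) = r j * q i + w3 * r (j - 1) * q (i - 1) + w3 * q (j - 2) * q (i + j - 1)"
proof -
  define P where "P j \<longleftrightarrow> (\<forall>i \<ge> -1. q (i + 2*j) =
      r j * q i + w3 * r (j - 1) * q (i - 1) + w3 * q (j - 2) * q (i + j - 1))" for j
  have "P j \<and> P (j + 1)"
    using \<open>j \<ge> 0\<close>
  proof (induction j rule: int_ge_induct)
    case base
    have "r 1 = w2" using r_rec[of 1] by (simp add: r_neg r_0)
    then show ?case
      unfolding P_def by (auto simp: q_neg r_neg r_0 q_rec[of "_ + 2"] ac_simps)
  next
    case (step j)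
    have "P (j + 2)"
      unfolding P_def
    proof (intro allI impI)
      fix i :: int
      assume "i \<ge> -1"
      have IH1: "q (i + 2*j + 4) =
          r (j + 1) * q (i + 2) + w3 * r j * q (i + 1) + w3 * q (j - 1) * q (i + j + 2)"
        using step.IH \<open>i \<ge> -1\<close> unfolding P_def
        by (auto dest!: spec[of _ "i + 2"] simp: algebra_simps)
      have IH2: "q (i + 2*j + 1) =
          r j * q (i + 1) + w3 * r (j - 1) * q i + w3 * q (j - 2) * q (i + j)"
        using step.IH \<open>i \<ge> -1\<close> unfolding P_def
        by (auto dest!: spec[of _ "i + 1"] simp: algebra_simps)
      have "q (i + 2*j + 1) =
          q (j - 1) * q (i + j + 2) + q j * q (i + j + 1) + w3 * q (j - 2) * q (i + j)"
        using q_add[of "j - 1" "i + j + 2"] step.hyps \<open>i \<ge> -1\<close> by (simp add: algebra_simps)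
      with IH2 have key: "r j * q (i + 1) + w3 * r (j - 1) * q i =
          q (j - 1) * q (i + j + 2) + q j * q (i + j + 1)"
        by simp
      have "q (i + 2*(j + 2)) =
          r (j + 1) * q (i + 2) + w3 * r j * q (i + 1) + w3 * q (j - 1) * q (i + j + 2)"
        using IH1 by (simp add: algebra_simps)
      also have "\<dots> = r (j + 2) * q i + w3 * r (j + 1) * q (i - 1) + w3 * q j * q (i + j + 1)
          + w3 * (r j * q (i + 1) + w3 * r (j - 1) * q i + q (j - 1) * q (i + j + 2) + q j * q (i + j + 1))"
        using step.hyps \<open>i \<ge> -1\<close> r_rec[of "j + 2"] q_rec[of "i + 2"]
        by (simp add: algebra_simps power2_eq_square W2_two)
      \<comment> \<open>by \<open>key\<close> the last summand is \<open>w3 * (X + X)\<close>, which vanishes in characteristic 2\<close>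
      also have "\<dots> = r (j + 2) * q i + w3 * r (j + 1) * q (i - 1) + w3 * q j * q (i + j + 1)"
        unfolding key by (simp add: W2_add_self W2_two)
      finally show "q (i + 2*(j + 2)) = r (j + 2) * q i + w3 * r (j + 2 - 1) * q (i - 1)
          + w3 * q (j + 2 - 2) * q (i + (j + 2) - 1)"
        by (simp add: ac_simps)
    qed
    with step.IH show ?case by (simp add: add.assoc)
  qed
  then show ?thesis
    using assms unfolding P_def by blast
qed

lemma q_doubling: "q (2*m) = q m ^ 2 + w2 * q (m - 1) ^ 2 \<and> q (2*m + 1) = w3 * q (m - 1) ^ 2"
proof -
  define P where "P m \<longleftrightarrow> q (2*m) = q m ^ 2 + w2 * q (m - 1) ^ 2 \<and> q (2*m + 1) = w3 * q (m - 1) ^ 2"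
    for m
  have "P m \<and> P (m + 1)" if "m \<ge> -1" for m
    using that
  proof (induction m rule: int_ge_induct)
    case base
    show ?case unfolding P_def using q_rec[of 1] by (simp add: q_neg q_0)
  next
    case (step m)
    then have "q (2*m) = q m ^ 2 + w2 * q (m - 1) ^ 2" "q (2*m + 1) = w3 * q (m - 1) ^ 2"
      "q (2*m + 2) = q (m + 1) ^ 2 + w2 * q m ^ 2" "q (2*m + 3) = w3 * q m ^ 2"
      unfolding P_def by (simp_all add: algebra_simps)
    moreover have "q (2*m + 4) = w2 * q (2*m + 2) + w3 * q (2*m + 1)"
      "q (2*m + 5) = w2 * q (2*m + 3) + w3 * q (2*m + 2)"
      "q (m + 2) = w2 * q m + w3 * q (m - 1)"
      using q_rec[of "2*m + 4"] q_rec[of "2*m + 5"] q_rec[of "m + 2"] step.hyps by (simp_all add: ac_simps)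
    ultimately have "P (m + 2)"
      unfolding P_def by (simp add: algebra_simps power2_eq_square W2_two)
    with step.IH show ?case by (simp add: add.assoc)
  qed
  moreover have "P m" if "m < -1"
    using that unfolding P_def by (simp add: q_neg)
  ultimately show ?thesis
    unfolding P_def by (metis linorder_not_le)
qed

lemma q_two_power_minus_3: "s \<ge> 1 \<Longrightarrow> q (2^s - 3) = 0"
proof (induction s rule: dec_induct)
  case base
  then show ?case by (simp add: q_neg)
next
  case (step s)
  have "(2::int)^Suc s - 3 = 2 * (2^s - 2) + 1" by simp
  then show ?case
    using q_doubling[of "2^s - 2"] step.IH by simp
qed

lemma q_eq_cross_product:
  assumes "i \<ge> 0" and "j \<ge> 1" and "q (i + j - 1) = 0" and "m = i + 2*j + 1"
  shows "q (m - 2) = (w3 * r (j - 2)) * q i - r (j - 1) * q (i + 1)"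
    and "q (m - 1) = r (j - 1) * (w3 * q (i - 1)) - r j * q i"
    and "q m = r j * q (i + 1) - (w3 * r (j - 2)) * (w3 * q (i - 1))"
proof -
  show "q (m - 2) = (w3 * r (j - 2)) * q i - r (j - 1) * q (i + 1)"
    using q_r_expansion[of "j - 1" "i + 1"] assms by (simp add: W2_diff_eq_add algebra_simps)
  show "q (m - 1) = r (j - 1) * (w3 * q (i - 1)) - r j * q i"
    using q_r_expansion[of j i] assms by (simp add: W2_diff_eq_add algebra_simps)
  have "q m = r (j + 1) * q (i - 1) + w3 * r j * q (i - 2)"
    using q_r_expansion[of "j + 1" "i - 1"] assms by (simp add: algebra_simps)
  also have "\<dots> = r j * q (i + 1) - (w3 * r (j - 2)) * (w3 * q (i - 1))"
    using r_rec[of "j + 1"] q_rec[of "i + 1"] assms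
    by (simp add: W2_diff_eq_add algebra_simps power2_eq_square)
  finally show "q m = r j * q (i + 1) - (w3 * r (j - 2)) * (w3 * q (i - 1))" .
qed

section \<open>Divisibility by w3 and primitivity\<close>

lemma prime_elem_w3: "prime_elem w3"
  unfolding w3_def prime_elem_const_poly_iff by (rule prime_elem_linear_field_poly) simp

lemma not_w3_dvd_w2: "\<not> w3 dvd w2"
proof
  assume "w3 dvd w2"
  then have "[:0, 1:] dvd coeff w2 1"
    unfolding w3_def const_poly_dvd_iff by blast
  then have "[:0, 1::bit:] dvd 1" by (simp add: w2_def)
  then show False
    using prime_elem_not_unit[OF prime_elem_linear_field_poly[of "1::bit" 0]] by simp
qed

lemma w3_dvd_q_even_minus_w2_power: "k \<ge> 0 \<Longrightarrow> w3 dvd q (2*k) - w2 ^ nat k"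
proof (induction k rule: int_ge_induct)
  case base
  then show ?case by (simp add: q_0)
next
  case (step k)
  have "w2 ^ nat (k + 1) = w2 * w2 ^ nat k"
    using step.hyps by (simp add: nat_add_distrib)
  moreover have "q (2*(k + 1)) = w2 * q (2*k) + w3 * q (2*k - 1)"
    using q_rec[of "2*k + 2"] step.hyps by (simp add: algebra_simps)
  ultimately have "q (2*(k + 1)) - w2 ^ nat (k + 1) = w2 * (q (2*k) - w2 ^ nat k) + w3 * q (2*k - 1)"
    by (simp add: algebra_simps)
  with step.IH show ?case by simp
qed

lemma not_w3_dvd_q_even:
  assumes "k \<ge> 0"
  shows "\<not> w3 dvd q (2*k)"
proof
  assume "w3 dvd q (2*k)"
  with w3_dvd_q_even_minus_w2_power[OF assms]
  have "w3 dvd q (2*k) - (q (2*k) - w2 ^ nat k)"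
    by (rule dvd_diff[rotated])
  then have "w3 dvd w2 ^ nat k" by simp
  then show False
    using prime_elem_dvd_power[OF prime_elem_w3] not_w3_dvd_w2 by blast
qed

lemma not_w3_dvd_q_consecutive:
  assumes "m \<ge> 2"
  shows "\<not> w3 dvd q (m - 2) \<or> \<not> w3 dvd q (m - 1)"
proof (cases "even m")
  case True
  then obtain k where "m - 2 = 2*k" by (metis dvd_diff even_numeral evenE)
  with assms show ?thesis using not_w3_dvd_q_even[of k] by simp
next
  case False
  then obtain k where "m - 1 = 2*k" by (metis odd_two_times_div_two_succ add_diff_cancel_right')
  with assms show ?thesis using not_w3_dvd_q_even[of k] by simp
qed

lemma q_combination_w3_power:
  "m \<ge> 2 \<Longrightarrow> \<exists>s1 s2 s3. s1 * q (m - 2) + s2 * q (m - 1) + s3 * q m = w3 ^ nat (m - 2)"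
proof (induction m rule: int_ge_induct)
  case base
  have "q 1 = 0" using q_rec[of 1] by (simp add: q_neg)
  then show ?case by (intro exI[of _ 1] exI[of _ 0]) (simp add: q_0)
next
  case (step m)
  then obtain s1 s2 s3 where s: "s1 * q (m - 2) + s2 * q (m - 1) + s3 * q m = w3 ^ nat (m - 2)"
    by blast
  have "(w3 * s2 - w2 * s1) * q (m - 1) + (w3 * s3) * q m + s1 * q (m + 1)
      = w3 * (s1 * q (m - 2) + s2 * q (m - 1) + s3 * q m)"
    using q_rec[of "m + 1"] step.hyps by (simp add: algebra_simps)
  also have "\<dots> = w3 ^ Suc (nat (m - 2))"
    unfolding s by simp
  also have "Suc (nat (m - 2)) = nat (m + 1 - 2)"
    using step.hyps by simp
  finally show ?case by auto
qed

lemma primitive3_q: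
  assumes "m \<ge> 2"
  shows "primitive3 (q (m - 2)) (q (m - 1)) (q m)"
proof -
  obtain s1 s2 s3 where s: "s1 * q (m - 2) + s2 * q (m - 1) + s3 * q m = w3 ^ nat (m - 2)"
    using q_combination_w3_power[OF assms] by blast
  from not_w3_dvd_q_consecutive[OF assms] show ?thesis
  proof
    assume "\<not> w3 dvd q (m - 2)"
    with prime_elem_w3 s show ?thesis by (rule primitive3_if_prime_power_combination)
  next
    assume "\<not> w3 dvd q (m - 1)"
    have "s2 * q (m - 1) + s1 * q (m - 2) + s3 * q m = w3 ^ nat (m - 2)"
      using s by (simp add: ac_simps)
    from prime_elem_w3 this \<open>\<not> w3 dvd q (m - 1)\<close> show ?thesis
      by (rule primitive3_swap[OF primitive3_if_prime_power_combination])
  qed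
qed

section \<open>Grading\<close>

lemma whom_0: "whom d 0"
  by (simp add: whom_def)

lemma whom_1: "whom 0 1"
  by (simp add: whom_def one_pCons coeff_pCons split: nat.splits)

lemma whom_w2: "whom 2 w2"
  by (simp add: whom_def w2_def coeff_pCons split: nat.splits)

lemma whom_w3: "whom 3 w3"
  by (simp add: whom_def w3_def coeff_pCons split: nat.splits)

lemma whom_add: "whom d p \<Longrightarrow> whom d p' \<Longrightarrow> whom d (p + p')"
  unfolding whom_def by (metis add.right_neutral coeff_add)

lemma whom_mult:
  assumes "whom d p" and "whom d' p'"
  shows "whom (d + d') (p * p')"
  unfolding whom_def
proof (intro allI impI)
  fix a b
  assume "coeff (coeff (p * p') a) b \<noteq> 0"
  then have "(\<Sum>k\<le>a. \<Sum>l\<le>b. coeff (coeff p k) l * coeff (coeff p' (a - k)) (b - l)) \<noteq> 0"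
    by (simp only: coeff_mult coeff_sum not_False_eq_True)
  then obtain k l where "k \<le> a" "l \<le> b" and "coeff (coeff p k) l * coeff (coeff p' (a - k)) (b - l) \<noteq> 0"
    by (metis (no_types, lifting) atMost_iff sum.neutral)
  then have "int (2*k + 3*l) = d" and "int (2*(a - k) + 3*(b - l)) = d'"
    using assms unfolding whom_def by (metis mult_zero_left mult_zero_right)+
  with \<open>k \<le> a\<close> \<open>l \<le> b\<close> show "int (2*a + 3*b) = d + d'"
    by linarith
qed

lemma whom_q: "whom m (q m)"
proof (induction "nat (m + 1)" arbitrary: m rule: less_induct)
  case less
  show ?case
  proof (cases "m \<le> 0")
    case True
    then show ?thesis by (cases "m = 0") (simp_all add: q_neg q_0 whom_0 whom_1)
  next
    case False
    then have "whom (m - 2) (q (m - 2))" "whom (m - 3) (q (m - 3))"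
      using less[of "m - 2"] less[of "m - 3"] by simp_all
    from whom_mult[OF whom_w2 this(1)] whom_mult[OF whom_w3 this(2)] False show ?thesis
      using q_rec[of m] by (simp add: whom_add)
  qed
qed

lemma whom_r: "whom (2*m) (r m)"
proof (induction "nat (m + 1)" arbitrary: m rule: less_induct)
  case less
  show ?case
  proof (cases "m \<le> 0")
    case True
    then show ?thesis by (cases "m = 0") (simp_all add: r_neg r_0 whom_0 whom_1)
  next
    case False
    have w3_square: "whom (3 + 3) (w3^2)"
      unfolding power2_eq_square by (rule whom_mult[OF whom_w3 whom_w3])
    have "whom (2*(m - 1)) (r (m - 1))" "whom (2*(m - 3)) (r (m - 3))"
      using less[of "m - 1"] less[of "m - 3"] False by simp_all
    from whom_mult[OF whom_w2 this(1)] whom_mult[OF w3_square this(2)] False show ?thesis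
      using r_rec[of m] by (simp add: whom_add algebra_simps)
  qed
qed

lemma hom3_r_column: "hom3 n (int n + 2*j - 2) (r j, w3 * r (j - 2), r (j - 1))"
  using whom_r[of j] whom_mult[OF whom_w3 whom_r[of "j - 2"]] whom_r[of "j - 1"]
  unfolding hom3_def by (simp add: algebra_simps)

lemma hom3_q_column: "hom3 n (int n + i) (w3 * q (i - 1), q (i + 1), q i)"
  using whom_mult[OF whom_w3 whom_q[of "i - 1"]] whom_q[of "i + 1"] whom_q[of i]
  unfolding hom3_def by (simp add: algebra_simps)

theorem mainTheorem17:
  fixes n t :: nat
  assumes "2^(t-1) < n" and "n \<le> 2^t - 4"
  defines "i \<equiv> (2::int)^t - 3 - int n"
      and "j \<equiv> int n - (2::int)^(t-1) + 1"
  shows "(\<forall>x y z :: W2. d1 n x y z =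
           det (vector [vector [x, r j, w3 * q (i - 1)],
                        vector [y, w3 * r (j - 2), q (i + 1)],
                        vector [z, r (j - 1), q i]] :: W2^3^3)) \<and>
         (\<forall>x y z :: W2. d1 n x y z = 0 \<longleftrightarrow>
           (\<exists>a b :: W2. x = a * r j + b * (w3 * q (i - 1)) \<and>
                        y = a * (w3 * r (j - 2)) + b * q (i + 1) \<and>
                        z = a * r (j - 1) + b * q i)) \<and>
         (\<forall>a b :: W2. (a * r j + b * (w3 * q (i - 1)) = 0 \<and>
                     a * (w3 * r (j - 2)) + b * q (i + 1) = 0 \<and>
                     a * r (j - 1) + b * q i = 0) \<longrightarrow> a = 0 \<and> b = 0) \<and>
         (\<exists>e. hom3 n e (r j, w3 * r (j - 2), r (j - 1))) \<and>
         (\<exists>e. hom3 n e (w3 * q (i - 1), q (i + 1), q i))"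
proof -
  have "t \<ge> 2"
    using assms(1,2) by (cases "t \<le> 1") (auto simp: le_Suc_eq)
  then have pow: "(2::int)^t = 2 * 2^(t - 1)"
    by (simp flip: power_Suc)
  have "(4::nat) \<le> 2^t"
    using power_increasing[of 2 t "2::nat"] \<open>t \<ge> 2\<close> by simp
  with assms(2) have "int n + 4 \<le> 2^t"
    by (metis le_diff_conv2 of_nat_add of_nat_le_iff of_nat_numeral of_nat_power)
  moreover have "(2::int)^(t - 1) < int n"
    using assms(1) by (metis of_nat_less_iff of_nat_numeral of_nat_power)
  ultimately have ij: "i \<ge> 0" "j \<ge> 1" "i + j - 1 = 2^(t - 1) - 3"
    using pow unfolding i_def j_def by linarith+
  have n: "int n = i + 2*j + 1"
    using pow unfolding i_def j_def by simp
  have "q (i + j - 1) = 0"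
    unfolding ij(3) using q_two_power_minus_3[of "t - 1"] \<open>t \<ge> 2\<close> by simp
  note D = q_eq_cross_product[OF ij(1,2) this n]
  have "int n \<ge> 2" using ij n by simp
  then have prim: "primitive3 (q (int n - 2)) (q (int n - 1)) (q (int n))"
    and nz: "q (int n - 2) \<noteq> 0 \<or> q (int n - 1) \<noteq> 0 \<or> q (int n) \<noteq> 0"
    using primitive3_q[of "int n"] not_w3_dvd_q_consecutive[of "int n"] by auto
  show ?thesis
    unfolding d1_def det_3_eq_triple_product D[symmetric]
    using cross_product_kernel[OF D prim nz] cross_product_independent[OF D nz]
      hom3_r_column[of n j] hom3_q_column[of n i] by blast
qed

end
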